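(* Let $q$ be a prime power. The nilpotent graph $\Gamma_{\mathfrak{N}}(\mathfrak{t}(2,\mathbb{F}_q))$ is $(q^2-q-1)$-regular.
   Context: $\mathfrak{t}(2,\mathbb{F}_q)$ is the Lie algebra of $2\times 2$ upper triangular matrices over $\mathbb{F}_q$ with bracket $[x,y]=xy-yx$. $\langle a,b\rangle$ denotes the Lie subalgebra generated by $a,b$, and $\mathrm{nil}(L)=\{x\in L\mid \langle h,x\rangle \text{ is nilpotent for all } h\in L\}$. For a finite-dimensional non-nilpotent Lie algebra $L$, the nilpotent graph $\Gamma_{\mathfrak{N}}(L)$ is the simple undirected graph with vertex set $L\setminus\mathrm{nil}(L)$ in which distinct vertices $x,y$ are adjacent iff $\langle x,y\rangle$ is nilpotent. A graph is $k$-regular if every vertex has degree $k$. *)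

theory Defs
  imports "HOL-Analysis.Analysis"
begin

type_synonym 'a mat2 = "'a^2^2"

text \<open>2x2 matrices over a field 'a are 'a mat2; product is (**).
  t(2,F) = upper triangular matrices, i.e. the (row 2, column 1) entry is zero; indices of type 2 are 0 (first) and 1 (second).\<close>

definition upper_tri :: "('a::field) mat2 set" where
  "upper_tri = {M. M $ 1 $ 0 = 0}"

definition lie_bracket :: "('a::field) mat2 \<Rightarrow> 'a mat2 \<Rightarrow> 'a mat2" where
  "lie_bracket x y = x ** y - y ** x"

definition msmult :: "'a::field \<Rightarrow> 'a mat2 \<Rightarrow> 'a mat2" where
  "msmult c M = (\<chi> i j. c * M $ i $ j)"

inductive_set lin_span :: "('a::field) mat2 set \<Rightarrow> 'a mat2 set" for X where
  span_zero: "0 \<in> lin_span X"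
| span_base: "x \<in> X \<Longrightarrow> x \<in> lin_span X"
| span_add: "x \<in> lin_span X \<Longrightarrow> y \<in> lin_span X \<Longrightarrow> x + y \<in> lin_span X"
| span_smult: "x \<in> lin_span X \<Longrightarrow> msmult c x \<in> lin_span X"

inductive_set lie_gen :: "('a::field) mat2 \<Rightarrow> 'a mat2 \<Rightarrow> 'a mat2 set" for a b where
  gen_a: "a \<in> lie_gen a b"
| gen_b: "b \<in> lie_gen a b"
| gen_zero: "0 \<in> lie_gen a b"
| gen_add: "x \<in> lie_gen a b \<Longrightarrow> y \<in> lie_gen a b \<Longrightarrow> x + y \<in> lie_gen a b"
| gen_smult: "x \<in> lie_gen a b \<Longrightarrow> msmult c x \<in> lie_gen a b"
| gen_bracket: "x \<in> lie_gen a b \<Longrightarrow> y \<in> lie_gen a b \<Longrightarrow> lie_bracket x y \<in> lie_gen a b"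

text \<open>Lower central series: L^1 = L, L^{k+1} = [L, L^k] (indexed from 0 here).\<close>
fun lcs :: "('a::field) mat2 set \<Rightarrow> nat \<Rightarrow> 'a mat2 set" where
  "lcs S 0 = S"
| "lcs S (Suc k) = lin_span {lie_bracket x y | x y. x \<in> S \<and> y \<in> lcs S k}"

definition lie_nilpotent :: "('a::field) mat2 set \<Rightarrow> bool" where
  "lie_nilpotent S \<longleftrightarrow> (\<exists>k. lcs S k = {0})"

definition nil_set :: "('a::field) mat2 set" where
  "nil_set = {x \<in> upper_tri. \<forall>h \<in> upper_tri. lie_nilpotent (lie_gen h x)}"

definition ng_vertices :: "('a::field) mat2 set" where
  "ng_vertices = upper_tri - nil_set"

definition ng_adj :: "('a::field) mat2 \<Rightarrow> 'a mat2 \<Rightarrow> bool" where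
  "ng_adj x y \<longleftrightarrow> x \<noteq> y \<and> lie_nilpotent (lie_gen x y)"

definition regular_graph :: "'v set \<Rightarrow> ('v \<Rightarrow> 'v \<Rightarrow> bool) \<Rightarrow> nat \<Rightarrow> bool" where
  "regular_graph V E k \<longleftrightarrow> (\<forall>x \<in> V. card {y \<in> V. E x y} = k)"

end

(* For upper triangular x and y, [x,y] is strictly upper triangular with corner entry
   \<delta>(x) \<beta>(y) - \<delta>(y) \<beta>(x), where \<delta> = diag_diff is the difference of the diagonal
   entries and \<beta> = corner the corner entry. If this vanishes, the algebra generated by x and y is abelian. Otherwise
   [x,y] is an eigenvector of ad z with the nonzero eigenvalue \<delta>(z) for z = x or z = y,
   so it lies in every term of the lower central series. Hence nil(t(2,F)) consists of
   the scalar matrices, and a vertex y is adjacent or equal to x exactly when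
   (\<delta>(y), \<beta>(y)) is a nonzero multiple of (\<delta>(x), \<beta>(x)); with the free lower right
   entry this gives (q - 1) q matrices, x among them. *)

theory Submission
  imports Defs
begin

lemma UNIV_2_01: "UNIV = {0::2, 1}"
proof -
  have "(2::2) = 0" by simp
  then show ?thesis using UNIV_2 by auto
qed

lemma mat2_eq_iff:
  "(A::'a::field mat2) = B \<longleftrightarrow>
     A$0$0 = B$0$0 \<and> A$0$1 = B$0$1 \<and> A$1$0 = B$1$0 \<and> A$1$1 = B$1$1"
proof -
  have "(\<forall>i::2. P i) \<longleftrightarrow> P 0 \<and> P 1" for P
    by (metis UNIV_2_01 UNIV_I insertE singletonD)
  then show ?thesis by (simp add: vec_eq_iff)
qed

lemma mat2_mult_entry:
  "((A::'a::field mat2) ** B) $ i $ j = A$i$0 * B$0$j + A$i$1 * B$1$j"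
  by (simp add: matrix_matrix_mult_def UNIV_2_01)

lemma msmult_msmult: "msmult c (msmult d (A::'a::field mat2)) = msmult (c * d) A"
  by (simp add: msmult_def mat2_eq_iff)

lemma msmult_1: "msmult 1 (A::'a::field mat2) = A"
  by (simp add: msmult_def mat2_eq_iff)

lemma msmult_0_right: "msmult c (0::'a::field mat2) = 0"
  by (simp add: msmult_def mat2_eq_iff)

lemma matrix_mult_msmult:
  "msmult c A ** (B::'a::field mat2) = msmult c (A ** B)"
  "B ** msmult c A = msmult c (B ** A)"
  by (simp_all add: mat2_eq_iff mat2_mult_entry msmult_def algebra_simps)

lemma matrix_mult_diff_distrib:
  "(A::'a::field mat2) ** (B - C) = A ** B - A ** C"
  "(B - C) ** A = B ** A - C ** A"
  by (simp_all add: mat2_eq_iff mat2_mult_entry algebra_simps)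

lemma matrix_mult_add_distrib:
  "(A::'a::field mat2) ** (B + C) = A ** B + A ** C"
  "(B + C) ** A = B ** A + C ** A"
  by (simp_all add: mat2_eq_iff mat2_mult_entry algebra_simps)

lemma lin_span_subset_zero:
  assumes "X \<subseteq> {0}"
  shows "lin_span X = {0::'a::field mat2}"
proof -
  have "z = 0" if "z \<in> lin_span X" for z
    using that assms by induction (auto simp: msmult_0_right)
  then show ?thesis by (auto intro: lin_span.span_zero)
qed

lemma lie_gen_subset:
  assumes "a \<in> A" "b \<in> A" "0 \<in> A"
    and "\<And>x y. x \<in> A \<Longrightarrow> y \<in> A \<Longrightarrow> x + y \<in> A"
    and "\<And>c x. x \<in> A \<Longrightarrow> msmult c x \<in> A"
    and "\<And>x y. x \<in> A \<Longrightarrow> y \<in> A \<Longrightarrow> lie_bracket x y \<in> A"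
  shows "lie_gen a b \<subseteq> A"
proof
  show "z \<in> A" if "z \<in> lie_gen a b" for z
    using that by induction (use assms in auto)
qed

definition centralizer :: "('a::field) mat2 \<Rightarrow> 'a mat2 set" where
  "centralizer s = {z. z ** s = s ** z}"

lemma lie_gen_subset_centralizer:
  assumes "a \<in> centralizer s" "b \<in> centralizer s"
  shows "lie_gen a b \<subseteq> centralizer s"
proof (rule lie_gen_subset)
  fix x y assume "x \<in> centralizer s" "y \<in> centralizer s"
  then have "x ** s = s ** x" "y ** s = s ** y"
    by (simp_all add: centralizer_def)
  then show "lie_bracket x y \<in> centralizer s"
    unfolding centralizer_def lie_bracket_def
    by (simp add: matrix_mult_diff_distrib) (metis matrix_mul_assoc)
qed (use assms in \<open>auto simp: centralizer_def matrix_mult_add_distrib matrix_mult_msmult\<close>)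

lemma lie_gen_commutative:
  assumes "a ** b = b ** a" "u \<in> lie_gen a b" "v \<in> lie_gen a b"
  shows "u ** v = v ** u"
proof -
  have "lie_gen a b \<subseteq> centralizer a" "lie_gen a b \<subseteq> centralizer b"
    by (rule lie_gen_subset_centralizer; use assms(1) in \<open>simp add: centralizer_def\<close>)+
  then have "lie_gen a b \<subseteq> centralizer u"
    using assms(2) by (intro lie_gen_subset_centralizer) (auto simp: centralizer_def)
  then show ?thesis
    using assms(3) by (auto simp: centralizer_def)
qed

lemma lie_nilpotent_if_commutative:
  assumes "\<And>u v. u \<in> S \<Longrightarrow> v \<in> S \<Longrightarrow> u ** v = v ** (u::'a::field mat2)"
  shows "lie_nilpotent S"
proof -
  have "lcs S 1 = {0}"
    using assms by (auto intro!: lin_span_subset_zero simp: lie_bracket_def)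
  then show ?thesis
    unfolding lie_nilpotent_def by blast
qed

lemma not_lie_nilpotent_if_eigenvector:
  assumes "e \<in> S" "z \<in> S" "lie_bracket z e = msmult c e" "c \<noteq> 0" "e \<noteq> 0"
  shows "\<not> lie_nilpotent S"
proof -
  have "e \<in> lcs S k" for k
  proof (induction k)
    case 0
    show ?case using assms(1) by simp
  next
    case (Suc k)
    then have "lie_bracket z e \<in> lcs S (Suc k)"
      using assms(2) by (auto intro: lin_span.span_base)
    then have "msmult (1 / c) (lie_bracket z e) \<in> lcs S (Suc k)"
      unfolding lcs.simps by (rule lin_span.span_smult)
    then show ?case
      using assms(3,4) by (simp add: msmult_msmult msmult_1)
  qed
  then show ?thesis
    using assms(5) unfolding lie_nilpotent_def by blast
qed

definition upper_mat :: "'a \<Rightarrow> 'a \<Rightarrow> 'a \<Rightarrow> ('a::field) mat2" where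
  "upper_mat a b d = (\<chi> i j. if i = 0 then (if j = 0 then a else b) else (if j = 0 then 0 else d))"

lemma upper_mat_entries [simp]:
  "upper_mat a b d $ 0 $ 0 = a" "upper_mat a b d $ 0 $ 1 = b"
  "upper_mat a b d $ 1 $ 0 = 0" "upper_mat a b d $ 1 $ 1 = d"
  by (simp_all add: upper_mat_def)

lemma upper_mat_in_upper_tri: "upper_mat a b d \<in> upper_tri"
  by (simp add: upper_tri_def)

lemma upper_mat_eq_iff: "upper_mat a b d = upper_mat a' b' d' \<longleftrightarrow> a = a' \<and> b = b' \<and> d = d'"
  by (simp add: mat2_eq_iff)

definition diag_diff :: "('a::field) mat2 \<Rightarrow> 'a" where
  "diag_diff x = x$0$0 - x$1$1"

definition corner :: "('a::field) mat2 \<Rightarrow> 'a" where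
  "corner x = x$0$1"

lemma diag_diff_upper_mat [simp]: "diag_diff (upper_mat a b d) = a - d"
  and corner_upper_mat [simp]: "corner (upper_mat a b d) = b"
  by (simp_all add: diag_diff_def corner_def)

lemma lie_bracket_upper_tri:
  assumes "x \<in> upper_tri" "y \<in> upper_tri"
  shows "lie_bracket x y = upper_mat 0 (diag_diff x * corner y - diag_diff y * corner x) 0"
  using assms unfolding upper_tri_def lie_bracket_def diag_diff_def corner_def
  by (simp add: mat2_eq_iff mat2_mult_entry algebra_simps)

lemma lie_bracket_upper_tri_corner:
  assumes "z \<in> upper_tri"
  shows "lie_bracket z (upper_mat 0 m 0) = msmult (diag_diff z) (upper_mat 0 m 0)"
  using assms unfolding upper_tri_def lie_bracket_def diag_diff_def msmult_def
  by (simp add: mat2_eq_iff mat2_mult_entry algebra_simps)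

lemma lie_nilpotent_lie_gen_iff:
  assumes x: "x \<in> upper_tri" and y: "y \<in> upper_tri"
  shows "lie_nilpotent (lie_gen x y) \<longleftrightarrow> diag_diff x * corner y = diag_diff y * corner x"
proof (cases "diag_diff x * corner y = diag_diff y * corner x")
  case True
  then have "x ** y = y ** x"
    using lie_bracket_upper_tri[OF x y]
    by (simp add: lie_bracket_def upper_mat_def mat2_eq_iff)
  then have "lie_nilpotent (lie_gen x y)"
    by (intro lie_nilpotent_if_commutative) (rule lie_gen_commutative)
  with True show ?thesis by simp
next
  case False
  define m where "m = diag_diff x * corner y - diag_diff y * corner x"
  have m: "m \<noteq> 0" using False by (simp add: m_def)
  have "lie_bracket x y \<in> lie_gen x y"
    by (intro lie_gen.gen_bracket lie_gen.gen_a lie_gen.gen_b)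
  then have e: "upper_mat 0 m 0 \<in> lie_gen x y"
    by (simp add: lie_bracket_upper_tri[OF x y] m_def)
  obtain z where z: "z \<in> lie_gen x y" "z \<in> upper_tri" "diag_diff z \<noteq> 0"
  proof (cases "diag_diff x = 0")
    case True
    then have "diag_diff y \<noteq> 0" using m by (simp add: m_def)
    then show ?thesis using that y lie_gen.gen_b by blast
  next
    case False
    then show ?thesis using that x lie_gen.gen_a by blast
  qed
  have "upper_mat 0 m 0 \<noteq> 0"
    using m by (simp add: mat2_eq_iff)
  then have "\<not> lie_nilpotent (lie_gen x y)"
    using not_lie_nilpotent_if_eigenvector[OF e z(1) lie_bracket_upper_tri_corner[OF z(2)] z(3)]
    by blast
  with False show ?thesis by simp
qed

lemma nil_set_iff:
  "(x::'a::field mat2) \<in> nil_set \<longleftrightarrow> x \<in> upper_tri \<and> diag_diff x = 0 \<and> corner x = 0"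
proof
  assume x: "x \<in> nil_set"
  then have "x \<in> upper_tri" by (simp add: nil_set_def)
  moreover have "lie_nilpotent (lie_gen (upper_mat 1 0 0) x)"
    and "lie_nilpotent (lie_gen (upper_mat 0 1 0) x)"
    using x upper_mat_in_upper_tri by (auto simp: nil_set_def)
  ultimately show "x \<in> upper_tri \<and> diag_diff x = 0 \<and> corner x = 0"
    by (simp add: lie_nilpotent_lie_gen_iff[OF upper_mat_in_upper_tri])
qed (simp add: nil_set_def lie_nilpotent_lie_gen_iff)

lemma ng_vertices_iff:
  "(x::'a::field mat2) \<in> ng_vertices \<longleftrightarrow> x \<in> upper_tri \<and> (diag_diff x \<noteq> 0 \<or> corner x \<noteq> 0)"
  by (auto simp: ng_vertices_def nil_set_iff)

lemma nonzero_proportional_iff: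
  fixes a b c d :: "'a::field"
  assumes "a \<noteq> 0 \<or> b \<noteq> 0"
  shows "(c \<noteq> 0 \<or> d \<noteq> 0) \<and> a * d = c * b \<longleftrightarrow> (\<exists>l. l \<noteq> 0 \<and> c = l * a \<and> d = l * b)"
proof
  assume cd: "(c \<noteq> 0 \<or> d \<noteq> 0) \<and> a * d = c * b"
  show "\<exists>l. l \<noteq> 0 \<and> c = l * a \<and> d = l * b"
  proof (cases "a = 0")
    case True
    then show ?thesis using assms cd by (intro exI[of _ "d / b"]) auto
  next
    case False
    then show ?thesis using cd by (intro exI[of _ "c / a"]) (auto simp: field_simps)
  qed
qed (use assms in auto)

lemma closed_neighbourhood_eq_image:
  assumes x: "(x::'a::field mat2) \<in> ng_vertices"
  shows "insert x {y \<in> ng_vertices. ng_adj x y}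
    = (\<lambda>(l, d). upper_mat (d + l * diag_diff x) (l * corner x) d) ` ((UNIV - {0}) \<times> UNIV)"
    (is "_ = ?g ` _")
proof -
  have xu: "x \<in> upper_tri" and x0: "diag_diff x \<noteq> 0 \<or> corner x \<noteq> 0"
    using x by (auto simp: ng_vertices_iff)
  have "y \<in> insert x {y \<in> ng_vertices. ng_adj x y} \<longleftrightarrow>
      y \<in> upper_tri \<and> (\<exists>l. l \<noteq> 0 \<and> diag_diff y = l * diag_diff x \<and> corner y = l * corner x)"
    for y
    using xu x0 nonzero_proportional_iff[OF x0, of "diag_diff y" "corner y"]
    by (auto simp: ng_adj_def ng_vertices_iff lie_nilpotent_lie_gen_iff mult.commute)
  also have "\<dots> y \<longleftrightarrow> y \<in> ?g ` ((UNIV - {0}) \<times> UNIV)" for y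
  proof
    assume "y \<in> upper_tri \<and> (\<exists>l. l \<noteq> 0 \<and> diag_diff y = l * diag_diff x \<and> corner y = l * corner x)"
    then obtain l where "y \<in> upper_tri" "l \<noteq> 0" "diag_diff y = l * diag_diff x" "corner y = l * corner x"
      by blast
    then have "y = ?g (l, y$1$1)" and "(l, y$1$1) \<in> (UNIV - {0}) \<times> UNIV"
      by (auto simp: upper_tri_def mat2_eq_iff diag_diff_def corner_def algebra_simps)
    then show "y \<in> ?g ` ((UNIV - {0}) \<times> UNIV)" by blast
  qed (auto simp: upper_mat_in_upper_tri)
  finally show ?thesis by blast
qed

lemma card_closed_neighbourhood:
  assumes "CARD('a::{field,finite}) = q" and x: "(x::'a mat2) \<in> ng_vertices"
  shows "card (insert x {y \<in> ng_vertices. ng_adj x y}) = (q - 1) * q"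
proof -
  let ?g = "\<lambda>(l, d). upper_mat (d + l * diag_diff x) (l * corner x) d"
  have x0: "diag_diff x \<noteq> 0 \<or> corner x \<noteq> 0"
    using x by (simp add: ng_vertices_iff)
  have "inj_on ?g ((UNIV - {0}) \<times> UNIV)"
    using x0 by (auto intro!: inj_onI simp: upper_mat_eq_iff)
  then have "card (?g ` ((UNIV - {0}) \<times> UNIV)) = (q - 1) * q"
    using assms(1) by (simp add: card_image card_cartesian_product card_Diff_singleton)
  then show ?thesis
    using closed_neighbourhood_eq_image[OF x] by simp
qed

theorem corollary4p7:
  fixes q :: nat
  assumes "CARD('a::{field,finite}) = q"
  shows "regular_graph (ng_vertices :: 'a mat2 set) ng_adj (q^2 - q - 1)"
  unfolding regular_graph_def
proof
  fix x :: "'a mat2"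
  assume "x \<in> ng_vertices"
  then have "card (insert x {y \<in> ng_vertices. ng_adj x y}) = (q - 1) * q"
    by (rule card_closed_neighbourhood[OF assms])
  moreover have "x \<notin> {y \<in> ng_vertices. ng_adj x y}"
    by (simp add: ng_adj_def)
  ultimately have "card {y \<in> ng_vertices. ng_adj x y} = (q - 1) * q - 1"
    by simp
  also have "\<dots> = q^2 - q - 1"
    by (simp add: power2_eq_square diff_mult_distrib)
  finally show "card {y \<in> ng_vertices. ng_adj x y} = q^2 - q - 1" .
qed

end
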